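(* Let $\Phi=\varphi\land\bigwedge RE\land\bigwedge DI$ be an $\mathcal{ALCQIO}_{b,Re}$-formula over $\tau$ with $RE=\{\mathit{Reach}(B_1,S_1,A_1),\dots,\mathit{Reach}(B_h,S_h,A_h)\}$, let $\mathcal{M}$ be a $\Phi$-semi-connected $\tau$-structure, let $1\le h'\le h$, let $f$ be an $h'$-useful labeling for $\mathcal{M}$, and let $X$ be a base for $D^{\mathcal{M}}_{h'}$ with $\mathit{val}_f(X)=\mathit{val}_f(D^{\mathcal{M}}_{h'})$. Then every $x\in X$ either belongs to $B_{h'}^{\mathcal{M}}$ or lies on a directed cycle of $D^{\mathcal{M}}_{h'}$.
   Context: Structures are finite; $\tau$ has atomic concepts, atomic roles (a subset $\mathsf{N_F}$ functional, interpreted as partial functions) and nominals. $\mathcal{ALCQIO}_b$ is the description logic with concepts built from atomic concepts and nominals using $\sqcap,\sqcup,\neg,\exists r.C,\exists^{\le n}r.C$ (roles atomic or inverse) and formulae Boolean combinations of inclusions $C\sqsubseteq D$. A reachability assertion $\mathit{Reach}(B,S,A)$ has atomic concepts $A,B$ and $S\subseteq\mathsf{N_F}$; an $\mathcal{ALCQIO}_{b,Re}$-formula is $\Phi=\varphi\land\bigwedge RE\land\bigwedge DI$ with $\varphi\in\mathcal{ALCQIO}_b$, $RE$ a finite set of reachability assertions and $DI$ a finite set of disjointness assertions $A_1\sqcap A_2\equiv\bot$, compatible (whenever two assertions in $RE$ share a role, their $A$-concepts are declared disjoint in $DI$). $\mathit{assoc}(\Phi)=\varphi\land\bigwedge_{\mathit{Reach}(B,S,A)\in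 RE}(B\sqsubseteq A)\land\bigwedge DI$. $D^{\mathcal{M}}_{h'}$ is the directed graph on vertex set $A_{h'}^{\mathcal{M}}$ with edges $\bigcup_{s\in S_{h'}}s^{\mathcal{M}}\cap(A_{h'}^{\mathcal{M}}\times A_{h'}^{\mathcal{M}})$. $\mathcal{M}$ is $\Phi$-semi-connected if $\mathcal{M}\models\mathit{assoc}(\Phi)$ and for every $h'$ and $u\in A_{h'}^{\mathcal{M}}$, $u$ is reachable in $D^{\mathcal{M}}_{h'}$ from $B_{h'}^{\mathcal{M}}$ or from a directed cycle of $D^{\mathcal{M}}_{h'}$. Types: $\mathrm{Con}(\varphi)$ is the set of concepts occurring in $\varphi$ (including subconcepts), $\mathrm{TYPES}_\varphi$ its power set, $\overline{tp}^{\varphi}_{\mathcal{M}}(u)=\{C\in\mathrm{Con}(\varphi)\mid u\in C^{\mathcal{M}}\}$. An $h'$-useful labeling for $\mathcal{M}$ is $f:A_{h'}^{\mathcal{M}}\to[1,|\mathrm{TYPES}_\varphi|]$ such that (1) $f(u)=f(v)$ implies equal types, and (2) for every $u\in A_{h'}^{\mathcal{M}}$, either $u\in B_{h'}^{\mathcal{M}}$ or there are $v,w\in A_{h'}^{\mathcal{M}}$ with $f(u)=f(v)$, $f(w)<f(v)$ and $(w,v)$ an edge of $D^{\mathcal{M}}_{h'}$. A base for $D^{\mathcal{M}}_{h'}$ is a set $X\subseteq A_{h'}^{\mathcal{M}}$ from which all of $A_{h'}^{\mathcal{M}}$ is reachable in $D^{\mathcal{M}}_{h'}$; $\mathit{val}_f(X)=\sum_{x\in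 X\setminus B_{h'}^{\mathcal{M}}}f(x)$ and $\mathit{val}_f(D^{\mathcal{M}}_{h'})$ is the minimum of $\mathit{val}_f(X)$ over all bases $X$. *)

theory Defs
  imports Main
begin

text \<open>Signature tau: atomic concepts of type 'c, atomic roles of type 'r,
  nominals of type 'n. The set of functional roles N_F is a parameter NF.\<close>

datatype 'r role = RAtom 'r | RInv 'r

datatype ('c, 'r, 'n) concept =
    CAtom 'c
  | CNom 'n
  | CNot "('c, 'r, 'n) concept"
  | CAnd "('c, 'r, 'n) concept" "('c, 'r, 'n) concept"
  | COr "('c, 'r, 'n) concept" "('c, 'r, 'n) concept"
  | CEx "'r role" "('c, 'r, 'n) concept"
  | CAtMost nat "'r role" "('c, 'r, 'n) concept"

datatype ('c, 'r, 'n) fml =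
    Incl "('c, 'r, 'n) concept" "('c, 'r, 'n) concept"
  | FNot "('c, 'r, 'n) fml"
  | FAnd "('c, 'r, 'n) fml" "('c, 'r, 'n) fml"
  | FOr "('c, 'r, 'n) fml" "('c, 'r, 'n) fml"

record ('d, 'c, 'r, 'n) struct =
  dom :: "'d set"
  cI :: "'c \<Rightarrow> 'd set"
  rI :: "'r \<Rightarrow> ('d \<times> 'd) set"
  nI :: "'n \<Rightarrow> 'd"

definition is_structure :: "'r set \<Rightarrow> ('d, 'c, 'r, 'n) struct \<Rightarrow> bool" where
  "is_structure NF M \<longleftrightarrow>
     finite (dom M) \<and>
     (\<forall>a. cI M a \<subseteq> dom M) \<and>
     (\<forall>r. rI M r \<subseteq> dom M \<times> dom M) \<and>
     (\<forall>n. nI M n \<in> dom M) \<and>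
     (\<forall>r\<in>NF. single_valued (rI M r))"

fun role_sem :: "('d, 'c, 'r, 'n) struct \<Rightarrow> 'r role \<Rightarrow> ('d \<times> 'd) set" where
  "role_sem M (RAtom r) = rI M r"
| "role_sem M (RInv r) = (rI M r)\<inverse>"

fun concept_sem :: "('d, 'c, 'r, 'n) struct \<Rightarrow> ('c, 'r, 'n) concept \<Rightarrow> 'd set" where
  "concept_sem M (CAtom a) = cI M a"
| "concept_sem M (CNom n) = {nI M n}"
| "concept_sem M (CNot C) = dom M - concept_sem M C"
| "concept_sem M (CAnd C D) = concept_sem M C \<inter> concept_sem M D"
| "concept_sem M (COr C D) = concept_sem M C \<union> concept_sem M D"
| "concept_sem M (CEx r C) =
     {u \<in> dom M. \<exists>v. (u, v) \<in> role_sem M r \<and> v \<in> concept_sem M C}"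
| "concept_sem M (CAtMost n r C) =
     {u \<in> dom M. card {v. (u, v) \<in> role_sem M r \<and> v \<in> concept_sem M C} \<le> n}"

fun fml_sat :: "('d, 'c, 'r, 'n) struct \<Rightarrow> ('c, 'r, 'n) fml \<Rightarrow> bool" where
  "fml_sat M (Incl C D) = (concept_sem M C \<subseteq> concept_sem M D)"
| "fml_sat M (FNot \<phi>) = (\<not> fml_sat M \<phi>)"
| "fml_sat M (FAnd \<phi> \<psi>) = (fml_sat M \<phi> \<and> fml_sat M \<psi>)"
| "fml_sat M (FOr \<phi> \<psi>) = (fml_sat M \<phi> \<or> fml_sat M \<psi>)"

fun subconcepts :: "('c, 'r, 'n) concept \<Rightarrow> ('c, 'r, 'n) concept set" where
  "subconcepts (CAtom a) = {CAtom a}"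
| "subconcepts (CNom n) = {CNom n}"
| "subconcepts (CNot C) = insert (CNot C) (subconcepts C)"
| "subconcepts (CAnd C D) = insert (CAnd C D) (subconcepts C \<union> subconcepts D)"
| "subconcepts (COr C D) = insert (COr C D) (subconcepts C \<union> subconcepts D)"
| "subconcepts (CEx r C) = insert (CEx r C) (subconcepts C)"
| "subconcepts (CAtMost n r C) = insert (CAtMost n r C) (subconcepts C)"

fun Con :: "('c, 'r, 'n) fml \<Rightarrow> ('c, 'r, 'n) concept set" where
  "Con (Incl C D) = subconcepts C \<union> subconcepts D"
| "Con (FNot \<phi>) = Con \<phi>"
| "Con (FAnd \<phi> \<psi>) = Con \<phi> \<union> Con \<psi>"
| "Con (FOr \<phi> \<psi>) = Con \<phi> \<union> Con \<psi>"

definition TYPES :: "('c, 'r, 'n) fml \<Rightarrow> ('c, 'r, 'n) concept set set" where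
  "TYPES \<phi> = Pow (Con \<phi>)"

definition tp :: "('c, 'r, 'n) fml \<Rightarrow> ('d, 'c, 'r, 'n) struct \<Rightarrow> 'd \<Rightarrow> ('c, 'r, 'n) concept set" where
  "tp \<phi> M u = {C \<in> Con \<phi>. u \<in> concept_sem M C}"

text \<open>A disjointness assertion A1 \<sqinter> A2 \<equiv> \<bottom> is the pair (A1,A2).
  The assertions of RE are listed as Reach(B_1,S_1,A_1),...,Reach(B_h,S_h,A_h),
  i.e. the list RE with entry i (1-based) at position i-1.\<close>

type_synonym ('c, 'r) reach = "'c \<times> 'r set \<times> 'c"

record ('c, 'r, 'n) reFormula =
  phi :: "('c, 'r, 'n) fml"
  RE :: "('c, 'r) reach list"
  DI :: "('c \<times> 'c) set"

definition reachB :: "('c, 'r, 'n) reFormula \<Rightarrow> nat \<Rightarrow> 'c" where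
  "reachB \<Phi> i = fst (RE \<Phi> ! (i - 1))"
definition reachS :: "('c, 'r, 'n) reFormula \<Rightarrow> nat \<Rightarrow> 'r set" where
  "reachS \<Phi> i = fst (snd (RE \<Phi> ! (i - 1)))"
definition reachA :: "('c, 'r, 'n) reFormula \<Rightarrow> nat \<Rightarrow> 'c" where
  "reachA \<Phi> i = snd (snd (RE \<Phi> ! (i - 1)))"

definition wf_reFormula :: "'r set \<Rightarrow> ('c, 'r, 'n) reFormula \<Rightarrow> bool" where
  "wf_reFormula NF \<Phi> \<longleftrightarrow>
     distinct (RE \<Phi>) \<and> finite (DI \<Phi>) \<and>
     (\<forall>i\<in>{1..length (RE \<Phi>)}. finite (reachS \<Phi> i) \<and> reachS \<Phi> i \<subseteq> NF) \<and>
     (\<forall>i\<in>{1..length (RE \<Phi>)}. \<forall>j\<in>{1..length (RE \<Phi>)}.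
        i \<noteq> j \<and> reachS \<Phi> i \<inter> reachS \<Phi> j \<noteq> {} \<longrightarrow>
        (reachA \<Phi> i, reachA \<Phi> j) \<in> DI \<Phi> \<or> (reachA \<Phi> j, reachA \<Phi> i) \<in> DI \<Phi>)"

definition sat_assoc :: "('d, 'c, 'r, 'n) struct \<Rightarrow> ('c, 'r, 'n) reFormula \<Rightarrow> bool" where
  "sat_assoc M \<Phi> \<longleftrightarrow>
     fml_sat M (phi \<Phi>) \<and>
     (\<forall>(B, S, A) \<in> set (RE \<Phi>). cI M B \<subseteq> cI M A) \<and>
     (\<forall>(A1, A2) \<in> DI \<Phi>. cI M A1 \<inter> cI M A2 = {})"

definition Dverts :: "('d, 'c, 'r, 'n) struct \<Rightarrow> ('c, 'r, 'n) reFormula \<Rightarrow> nat \<Rightarrow> 'd set" where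
  "Dverts M \<Phi> i = cI M (reachA \<Phi> i)"

definition Dedges :: "('d, 'c, 'r, 'n) struct \<Rightarrow> ('c, 'r, 'n) reFormula \<Rightarrow> nat \<Rightarrow> ('d \<times> 'd) set" where
  "Dedges M \<Phi> i = (\<Union>s\<in>reachS \<Phi> i. rI M s) \<inter> (Dverts M \<Phi> i \<times> Dverts M \<Phi> i)"

definition reachable_from :: "('d \<times> 'd) set \<Rightarrow> 'd set \<Rightarrow> 'd \<Rightarrow> bool" where
  "reachable_from E X u \<longleftrightarrow> (\<exists>x\<in>X. (x, u) \<in> E\<^sup>*)"

definition on_cycle :: "('d \<times> 'd) set \<Rightarrow> 'd \<Rightarrow> bool" where
  "on_cycle E v \<longleftrightarrow> (v, v) \<in> E\<^sup>+"

definition semi_connected ::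
  "('c, 'r, 'n) reFormula \<Rightarrow> ('d, 'c, 'r, 'n) struct \<Rightarrow> bool" where
  "semi_connected \<Phi> M \<longleftrightarrow>
     sat_assoc M \<Phi> \<and>
     (\<forall>i\<in>{1..length (RE \<Phi>)}. \<forall>u\<in>Dverts M \<Phi> i.
        reachable_from (Dedges M \<Phi> i) (cI M (reachB \<Phi> i)) u \<or>
        (\<exists>v. on_cycle (Dedges M \<Phi> i) v \<and> (v, u) \<in> (Dedges M \<Phi> i)\<^sup>*))"

definition useful_labeling ::
  "('c, 'r, 'n) reFormula \<Rightarrow> ('d, 'c, 'r, 'n) struct \<Rightarrow> nat \<Rightarrow> ('d \<Rightarrow> nat) \<Rightarrow> bool" where
  "useful_labeling \<Phi> M i f \<longleftrightarrow>
     (\<forall>u\<in>Dverts M \<Phi> i. f u \<in> {1..card (TYPES (phi \<Phi>))}) \<and>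
     (\<forall>u\<in>Dverts M \<Phi> i. \<forall>v\<in>Dverts M \<Phi> i.
        f u = f v \<longrightarrow> tp (phi \<Phi>) M u = tp (phi \<Phi>) M v) \<and>
     (\<forall>u\<in>Dverts M \<Phi> i. u \<in> cI M (reachB \<Phi> i) \<or>
        (\<exists>v\<in>Dverts M \<Phi> i. \<exists>w\<in>Dverts M \<Phi> i.
           f u = f v \<and> f w < f v \<and> (w, v) \<in> Dedges M \<Phi> i))"

definition is_base ::
  "('d, 'c, 'r, 'n) struct \<Rightarrow> ('c, 'r, 'n) reFormula \<Rightarrow> nat \<Rightarrow> 'd set \<Rightarrow> bool" where
  "is_base M \<Phi> i X \<longleftrightarrow>
     X \<subseteq> Dverts M \<Phi> i \<and>
     (\<forall>u\<in>Dverts M \<Phi> i. reachable_from (Dedges M \<Phi> i) X u)"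

definition val_set ::
  "('d, 'c, 'r, 'n) struct \<Rightarrow> ('c, 'r, 'n) reFormula \<Rightarrow> nat \<Rightarrow> ('d \<Rightarrow> nat) \<Rightarrow> 'd set \<Rightarrow> nat" where
  "val_set M \<Phi> i f X = (\<Sum>x\<in>X - cI M (reachB \<Phi> i). f x)"

definition val_graph ::
  "('d, 'c, 'r, 'n) struct \<Rightarrow> ('c, 'r, 'n) reFormula \<Rightarrow> nat \<Rightarrow> ('d \<Rightarrow> nat) \<Rightarrow> nat" where
  "val_graph M \<Phi> i f = Min {val_set M \<Phi> i f X | X. is_base M \<Phi> i X}"

end

theory Submission
  imports Defs
begin

text \<open>If a base element x lies neither in B nor on a cycle, semi-connectedness gives x a
  proper ancestor z. Some base element reaches z, and it cannot be x itself, since x would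
  then lie on a cycle; so it also reaches x, and dropping x leaves a base. Because useful
  labels are positive, this base is strictly cheaper, contradicting minimality.\<close>

lemma trancl_predecessor_if_reachable_or_from_cycle:
  assumes "reachable_from E B x \<or> (\<exists>v. on_cycle E v \<and> (v, x) \<in> E\<^sup>*)"
    and "x \<notin> B" and "\<not> on_cycle E x"
  obtains z where "(z, x) \<in> E\<^sup>+"
proof -
  from assms(1) obtain y where "(y, x) \<in> E\<^sup>*" and "y \<noteq> x"
    using assms(2,3) unfolding reachable_from_def on_cycle_def by blast
  then show ?thesis using that by (blast dest: rtranclD)
qed

lemma reachable_from_remove:
  assumes "(z, x) \<in> E\<^sup>+" and "reachable_from E X z" and "\<not> on_cycle E x"
    and "reachable_from E X u"
  shows "reachable_from E (X - {x}) u"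
proof -
  obtain y where "y \<in> X" and "(y, z) \<in> E\<^sup>*"
    using assms(2) unfolding reachable_from_def by blast
  have yx: "(y, x) \<in> E\<^sup>+"
    using \<open>(y, z) \<in> E\<^sup>*\<close> assms(1) by (rule rtrancl_trancl_trancl)
  with assms(3) have "y \<noteq> x" unfolding on_cycle_def by blast
  obtain y' where "y' \<in> X" and y'u: "(y', u) \<in> E\<^sup>*"
    using assms(4) unfolding reachable_from_def by blast
  show ?thesis
  proof (cases "y' = x")
    case True
    with yx y'u have "(y, u) \<in> E\<^sup>*" by simp
    with \<open>y \<in> X\<close> \<open>y \<noteq> x\<close> show ?thesis unfolding reachable_from_def by blast
  next
    case False
    with \<open>y' \<in> X\<close> y'u show ?thesis unfolding reachable_from_def by blast
  qed
qed

lemma Dedges_subset: "Dedges M \<Phi> i \<subseteq> Dverts M \<Phi> i \<times> Dverts M \<Phi> i"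
  unfolding Dedges_def by blast

lemma is_base_remove:
  assumes "is_base M \<Phi> i X" and "(z, x) \<in> (Dedges M \<Phi> i)\<^sup>+"
    and "\<not> on_cycle (Dedges M \<Phi> i) x"
  shows "is_base M \<Phi> i (X - {x})"
proof -
  have "z \<in> Dverts M \<Phi> i"
    using assms(2) Dedges_subset by (metis SigmaD1 subsetD tranclD)
  then have "reachable_from (Dedges M \<Phi> i) X z"
    using assms(1) unfolding is_base_def by blast
  with assms show ?thesis
    unfolding is_base_def by (blast intro: reachable_from_remove)
qed

lemma finite_Dverts: "is_structure NF M \<Longrightarrow> finite (Dverts M \<Phi> i)"
  unfolding is_structure_def Dverts_def by (meson finite_subset)

lemma val_graph_le_val_set:
  assumes "is_structure NF M" and "is_base M \<Phi> i Y"
  shows "val_graph M \<Phi> i f \<le> val_set M \<Phi> i f Y"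
proof -
  have "{val_set M \<Phi> i f X | X. is_base M \<Phi> i X} \<subseteq> val_set M \<Phi> i f ` Pow (Dverts M \<Phi> i)"
    unfolding is_base_def by auto
  then have "finite {val_set M \<Phi> i f X | X. is_base M \<Phi> i X}"
    using finite_Dverts[OF assms(1)] by (meson finite_Pow_iff finite_imageI finite_subset)
  then show ?thesis
    unfolding val_graph_def using assms(2) by (intro Min_le) auto
qed

lemma val_set_remove:
  assumes "finite X" and "x \<in> X" and "x \<notin> cI M (reachB \<Phi> i)"
  shows "val_set M \<Phi> i f X = f x + val_set M \<Phi> i f (X - {x})"
proof -
  have "X - {x} - cI M (reachB \<Phi> i) = (X - cI M (reachB \<Phi> i)) - {x}" by blast
  then show ?thesis
    unfolding val_set_def using assms by (simp add: sum.remove)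
qed

theorem lemma6:
  fixes NF :: "'r set"
    and \<Phi> :: "('c, 'r, 'n) reFormula"
    and M :: "('d, 'c, 'r, 'n) struct"
    and h' :: nat
    and f :: "'d \<Rightarrow> nat"
    and X :: "'d set"
  assumes "wf_reFormula NF \<Phi>"
    and "is_structure NF M"
    and "semi_connected \<Phi> M"
    and "1 \<le> h'" and "h' \<le> length (RE \<Phi>)"
    and "useful_labeling \<Phi> M h' f"
    and "is_base M \<Phi> h' X"
    and "val_set M \<Phi> h' f X = val_graph M \<Phi> h' f"
  shows "\<forall>x\<in>X. x \<in> cI M (reachB \<Phi> h') \<or> on_cycle (Dedges M \<Phi> h') x"
proof (intro ballI disjCI)
  fix x assume "x \<in> X" and cyc: "\<not> on_cycle (Dedges M \<Phi> h') x"
  show "x \<in> cI M (reachB \<Phi> h')"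
  proof (rule ccontr)
    assume notB: "x \<notin> cI M (reachB \<Phi> h')"
    have xV: "x \<in> Dverts M \<Phi> h'" using assms(7) \<open>x \<in> X\<close> unfolding is_base_def by blast
    with assms(3-5) have "reachable_from (Dedges M \<Phi> h') (cI M (reachB \<Phi> h')) x \<or>
        (\<exists>v. on_cycle (Dedges M \<Phi> h') v \<and> (v, x) \<in> (Dedges M \<Phi> h')\<^sup>*)"
      unfolding semi_connected_def by simp
    then obtain z where "(z, x) \<in> (Dedges M \<Phi> h')\<^sup>+"
      using notB cyc by (rule trancl_predecessor_if_reachable_or_from_cycle)
    with assms(7) have "is_base M \<Phi> h' (X - {x})" using cyc by (rule is_base_remove)
    with assms(2) have "val_graph M \<Phi> h' f \<le> val_set M \<Phi> h' f (X - {x})"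
      by (rule val_graph_le_val_set)
    moreover have "finite X"
      using assms(7) finite_Dverts[OF assms(2)] unfolding is_base_def by (meson finite_subset)
    then have "val_set M \<Phi> h' f X = f x + val_set M \<Phi> h' f (X - {x})"
      using \<open>x \<in> X\<close> notB by (rule val_set_remove)
    moreover have "1 \<le> f x" using assms(6) xV unfolding useful_labeling_def by auto
    ultimately show False using assms(8) by linarith
  qed
qed

end
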